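(* Let $(A,G)$ be an admissible pair with $A\in M_{Q_0}(\mathbb Z)$, and assume that $G$ has exactly two orbits in $Q_0$. Then $(A,G)$ is a stable admissible pair.
   Context: $Q_0$ finite; $A=(a_{ij})$ skew-symmetrizable ($DA$ skew-symmetric for a positive integer diagonal $D$). Mutation $\mu_k(B)=(b'_{ij})$: $b'_{ij}=-b_{ij}$ if $k\in\{i,j\}$, else $b_{ij}+\tfrac12(|b_{ik}|b_{kj}+b_{ik}|b_{kj}|)$. A permutation $g$ of $Q_0$ is an automorphism of $B$ if $b_{gi,gj}=b_{ij}$; a group $G$ of automorphisms of $B$ is admissible ($(B,G)$ an admissible pair) if for distinct $i,j$ in the same $G$-orbit there is no path of length $1$ or $2$ from $i$ to $j$ in the quiver of $B$ ($b_{ij}\le0$ and no $k$ with $b_{ik}>0$, $b_{kj}>0$). For a $G$-orbit $\mathbf i$, $\mu^G_{\mathbf i}=\prod_{j\in\mathbf i}\mu_j$. $(A,G)$ is stable if for every finite sequence of $G$-orbits $\mathbf i_1,\ldots,\mathbf i_n$, each pair $(\mu^G_{\mathbf i_m}\circ\cdots\circ\mu^G_{\mathbf i_1}(A),G)$, $1\le m\le n$, is admissible. *)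

theory Defs
  imports "HOL-Combinatorics.Permutations"
begin

text \<open>Exchange matrices indexed by a finite vertex set Q0 are functions
  'a => 'a => int; only the entries with indices in Q0 are relevant.\<close>

definition skew_symmetrizable :: "'a set \<Rightarrow> ('a \<Rightarrow> 'a \<Rightarrow> int) \<Rightarrow> bool" where
  "skew_symmetrizable Q0 A \<longleftrightarrow>
     (\<exists>D :: 'a \<Rightarrow> int. (\<forall>i\<in>Q0. D i > 0) \<and>
        (\<forall>i\<in>Q0. \<forall>j\<in>Q0. D i * A i j = - (D j * A j i)))"

definition mutation :: "'a \<Rightarrow> ('a \<Rightarrow> 'a \<Rightarrow> int) \<Rightarrow> ('a \<Rightarrow> 'a \<Rightarrow> int)" where
  "mutation k B = (\<lambda>i j. if i = k \<or> j = k then - B i j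
      else B i j + (\<bar>B i k\<bar> * B k j + B i k * \<bar>B k j\<bar>) div 2)"

definition is_automorphism :: "'a set \<Rightarrow> ('a \<Rightarrow> 'a \<Rightarrow> int) \<Rightarrow> ('a \<Rightarrow> 'a) \<Rightarrow> bool" where
  "is_automorphism Q0 B g \<longleftrightarrow> g permutes Q0 \<and> (\<forall>i\<in>Q0. \<forall>j\<in>Q0. B (g i) (g j) = B i j)"

definition perm_group_on :: "'a set \<Rightarrow> ('a \<Rightarrow> 'a) set \<Rightarrow> bool" where
  "perm_group_on Q0 G \<longleftrightarrow> id \<in> G \<and> (\<forall>g\<in>G. g permutes Q0) \<and>
     (\<forall>g\<in>G. \<forall>h\<in>G. g \<circ> h \<in> G) \<and> (\<forall>g\<in>G. inv g \<in> G)"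

definition automorphism_group :: "'a set \<Rightarrow> ('a \<Rightarrow> 'a \<Rightarrow> int) \<Rightarrow> ('a \<Rightarrow> 'a) set \<Rightarrow> bool" where
  "automorphism_group Q0 B G \<longleftrightarrow> perm_group_on Q0 G \<and> (\<forall>g\<in>G. is_automorphism Q0 B g)"

definition orbit :: "('a \<Rightarrow> 'a) set \<Rightarrow> 'a \<Rightarrow> 'a set" where
  "orbit G i = (\<lambda>g. g i) ` G"

definition orbits :: "'a set \<Rightarrow> ('a \<Rightarrow> 'a) set \<Rightarrow> 'a set set" where
  "orbits Q0 G = orbit G ` Q0"

definition admissible :: "'a set \<Rightarrow> ('a \<Rightarrow> 'a \<Rightarrow> int) \<Rightarrow> ('a \<Rightarrow> 'a) set \<Rightarrow> bool" where
  "admissible Q0 B G \<longleftrightarrow> automorphism_group Q0 B G \<and>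
     (\<forall>i\<in>Q0. \<forall>j\<in>Q0. i \<noteq> j \<and> j \<in> orbit G i \<longrightarrow>
         B i j \<le> 0 \<and> \<not> (\<exists>k\<in>Q0. B i k > 0 \<and> B k j > 0))"

text \<open>Orbit mutation: the product of the mutations at the vertices of the orbit,
  taken in some fixed enumeration of the orbit (for admissible pairs these
  mutations commute, so the choice is irrelevant).\<close>
definition orbit_mutation :: "'a set \<Rightarrow> ('a \<Rightarrow> 'a \<Rightarrow> int) \<Rightarrow> ('a \<Rightarrow> 'a \<Rightarrow> int)" where
  "orbit_mutation I B = foldr mutation (SOME xs. distinct xs \<and> set xs = I) B"

definition orbit_mutations :: "'a set list \<Rightarrow> ('a \<Rightarrow> 'a \<Rightarrow> int) \<Rightarrow> ('a \<Rightarrow> 'a \<Rightarrow> int)" where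
  "orbit_mutations Is B = fold orbit_mutation Is B"

definition stable_pair :: "'a set \<Rightarrow> ('a \<Rightarrow> 'a \<Rightarrow> int) \<Rightarrow> ('a \<Rightarrow> 'a) set \<Rightarrow> bool" where
  "stable_pair Q0 A G \<longleftrightarrow>
     (\<forall>Is. set Is \<subseteq> orbits Q0 G \<longrightarrow>
        (\<forall>m. 1 \<le> m \<and> m \<le> length Is \<longrightarrow> admissible Q0 (orbit_mutations (take m Is) A) G))"

end

theory Submission
  imports Defs
begin

text \<open>For a skew-symmetrizable admissible pair, the entries between vertices of a common
  orbit vanish and no vertex k sees a sign change between two such vertices i, j, i.e.
  b_ik b_kj \<le> 0 (the pair is strongly admissible).  With only two orbits, any two vertices
  outside the mutated orbit lie in a common orbit, so every correction term of the orbit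
  mutation vanishes and the orbit mutation just negates the matrix.  Negation preserves
  strong admissibility, hence every sequence of orbit mutations yields an admissible pair.\<close>

lemma perm_group_on_in_orbit_self:
  assumes "perm_group_on Q0 G"
  shows "i \<in> orbit G i"
proof -
  have "id \<in> G"
    using assms unfolding perm_group_on_def by blast
  then show ?thesis
    unfolding orbit_def by (metis id_apply image_eqI)
qed

lemma perm_group_on_orbit_subset:
  assumes "perm_group_on Q0 G" "i \<in> Q0"
  shows "orbit G i \<subseteq> Q0"
proof
  fix j
  assume "j \<in> orbit G i"
  then obtain g where "g \<in> G" "j = g i"
    unfolding orbit_def by blast
  with assms show "j \<in> Q0"
    unfolding perm_group_on_def by (metis permutes_in_image)
qed

lemma perm_group_on_orbit_sym:
  assumes "perm_group_on Q0 G" "j \<in> orbit G i"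
  shows "i \<in> orbit G j"
proof -
  obtain g where g: "g \<in> G" "j = g i"
    using assms(2) unfolding orbit_def by blast
  then have "inv g \<in> G" "inv g j = i"
    using assms(1) unfolding perm_group_on_def by (metis permutes_inverses(2))+
  then show ?thesis
    unfolding orbit_def by (metis image_eqI)
qed

lemma perm_group_on_orbit_trans:
  assumes "perm_group_on Q0 G" "j \<in> orbit G i" "k \<in> orbit G j"
  shows "k \<in> orbit G i"
proof -
  obtain g h where "g \<in> G" "h \<in> G" "j = g i" "k = h j"
    using assms(2,3) unfolding orbit_def by blast
  moreover from this have "h \<circ> g \<in> G"
    using assms(1) unfolding perm_group_on_def by blast
  ultimately show ?thesis
    unfolding orbit_def by (metis comp_apply image_eqI)
qed

lemma two_orbits_same_orbit_outside:
  assumes "perm_group_on Q0 G" "card (orbits Q0 G) = 2" "I \<in> orbits Q0 G"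
    and "i \<in> Q0" "j \<in> Q0" "i \<notin> I" "j \<notin> I"
  shows "j \<in> orbit G i"
proof -
  have "orbit G i \<in> orbits Q0 G - {I}" "orbit G j \<in> orbits Q0 G - {I}"
    using assms(4-7) perm_group_on_in_orbit_self[OF assms(1)] unfolding orbits_def by auto
  moreover have "card (orbits Q0 G - {I}) = 1"
    using assms(2,3) by simp
  ultimately have "orbit G i = orbit G j"
    by (metis card_1_singletonE singletonD)
  then show ?thesis
    using perm_group_on_in_orbit_self[OF assms(1)] by blast
qed

lemma skew_symmetrizable_sgn:
  assumes "skew_symmetrizable Q0 A" "i \<in> Q0" "j \<in> Q0"
  shows "sgn (A j i) = - sgn (A i j)"
proof -
  obtain D :: "'a \<Rightarrow> int" where D: "\<forall>i\<in>Q0. D i > 0"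
      "\<forall>i\<in>Q0. \<forall>j\<in>Q0. D i * A i j = - (D j * A j i)"
    using assms(1) unfolding skew_symmetrizable_def by blast
  have "D i * A i j = - (D j * A j i)" "D i > 0" "D j > 0"
    using D assms(2,3) by blast+
  then have "sgn (A i j) = sgn (- (D j * A j i))"
    by (metis mult_1 sgn_mult sgn_pos)
  also have "\<dots> = - sgn (A j i)"
    using \<open>D j > 0\<close> by (simp add: sgn_mult)
  finally show ?thesis
    by simp
qed

lemma mutation_correction_eq_0:
  fixes a b :: int
  assumes "a * b \<le> 0"
  shows "(\<bar>a\<bar> * b + a * \<bar>b\<bar>) div 2 = 0"
proof -
  have "\<bar>a\<bar> * b + a * \<bar>b\<bar> = 0"
    using assms by (cases "a \<ge> 0"; cases "b \<ge> 0") (auto simp: mult_le_0_iff)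
  then show ?thesis
    by simp
qed

lemma foldr_mutation_eq_if:
  assumes "distinct xs" "set xs \<subseteq> K" "K \<subseteq> Q0"
    and "\<And>i j. i \<in> K \<Longrightarrow> j \<in> K \<Longrightarrow> B i j = 0"
    and "\<And>i j k. i \<in> Q0 \<Longrightarrow> j \<in> Q0 \<Longrightarrow> k \<in> K \<Longrightarrow> B i k * B k j \<le> 0"
    and "i \<in> Q0" "j \<in> Q0"
  shows "foldr mutation xs B i j = (if i \<in> set xs \<or> j \<in> set xs then - B i j else B i j)"
  using assms(1,2,6,7)
proof (induction xs arbitrary: i j)
  case Nil
  then show ?case by simp
next
  case (Cons x xs)
  let ?C = "foldr mutation xs B"
  have x: "x \<in> K" "x \<in> Q0" "x \<notin> set xs"
    using Cons.prems assms(3) by auto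
  have IH: "?C i' j' = (if i' \<in> set xs \<or> j' \<in> set xs then - B i' j' else B i' j')"
    if "i' \<in> Q0" "j' \<in> Q0" for i' j'
    using Cons.IH Cons.prems that by simp
  have "?C i x * ?C x j \<le> 0"
    using IH[of i x] IH[of x j] assms(5)[of i j x] Cons.prems x
    by (cases "i \<in> set xs"; cases "j \<in> set xs") (auto simp: assms(4))
  then have correction: "(\<bar>?C i x\<bar> * ?C x j + ?C i x * \<bar>?C x j\<bar>) div 2 = 0"
    by (rule mutation_correction_eq_0)
  have "foldr mutation (x # xs) B i j = mutation x ?C i j"
    by simp
  also have "\<dots> = (if i = x \<or> j = x then - ?C i j else ?C i j)"
    using correction by (simp add: mutation_def)
  also have "\<dots> = (if i \<in> set (x # xs) \<or> j \<in> set (x # xs) then - B i j else B i j)"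
    using IH[of i j] Cons.prems x assms(4) by auto
  finally show ?case .
qed

definition strongly_admissible :: "'a set \<Rightarrow> ('a \<Rightarrow> 'a \<Rightarrow> int) \<Rightarrow> ('a \<Rightarrow> 'a) set \<Rightarrow> bool" where
  "strongly_admissible Q0 B G \<longleftrightarrow> automorphism_group Q0 B G \<and>
     (\<forall>i\<in>Q0. \<forall>j\<in>Q0. j \<in> orbit G i \<longrightarrow> B i j = 0 \<and> (\<forall>k\<in>Q0. B i k * B k j \<le> 0))"

lemma strongly_admissible_imp_admissible:
  assumes "strongly_admissible Q0 B G"
  shows "admissible Q0 B G"
proof -
  have "\<not> (B i k > 0 \<and> B k j > 0)" if "B i k * B k j \<le> 0" for i j k
    using that by (auto simp: mult_le_0_iff)
  then show ?thesis
    using assms unfolding strongly_admissible_def admissible_def by fastforce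
qed

lemma strongly_admissible_uminus:
  "strongly_admissible Q0 B G \<Longrightarrow> strongly_admissible Q0 (\<lambda>i j. - B i j) G"
  unfolding strongly_admissible_def automorphism_group_def is_automorphism_def by simp

lemma strongly_admissible_cong:
  assumes "\<And>i j. i \<in> Q0 \<Longrightarrow> j \<in> Q0 \<Longrightarrow> C i j = B i j"
  shows "strongly_admissible Q0 C G \<longleftrightarrow> strongly_admissible Q0 B G"
proof -
  have "is_automorphism Q0 C g \<longleftrightarrow> is_automorphism Q0 B g" for g
    unfolding is_automorphism_def using assms by (auto simp: permutes_in_image)
  then show ?thesis
    unfolding strongly_admissible_def automorphism_group_def using assms by simp
qed

lemma admissible_imp_strongly_admissible:
  assumes skew: "skew_symmetrizable Q0 A" and adm: "admissible Q0 A G"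
  shows "strongly_admissible Q0 A G"
proof -
  have group: "perm_group_on Q0 G"
    using adm unfolding admissible_def automorphism_group_def by blast
  have no_path: "A i j \<le> 0 \<and> \<not> (\<exists>k\<in>Q0. A i k > 0 \<and> A k j > 0)"
    if "i \<in> Q0" "j \<in> Q0" "i \<noteq> j" "j \<in> orbit G i" for i j
    using adm that unfolding admissible_def by blast
  have sgn_swap: "sgn (A j i) = - sgn (A i j)" if "i \<in> Q0" "j \<in> Q0" for i j
    using skew_symmetrizable_sgn[OF skew that] .
  have "A i j = 0 \<and> A i k * A k j \<le> 0"
    if "i \<in> Q0" "j \<in> Q0" "k \<in> Q0" "j \<in> orbit G i" for i j k
  proof (cases "i = j")
    case True
    then show ?thesis
      using sgn_swap[of i i] sgn_swap[of i k] that
      by (auto simp: sgn_0_0 mult_le_0_iff sgn_if split: if_splits)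
  next
    case False
    have "i \<in> orbit G j"
      using perm_group_on_orbit_sym[OF group that(4)] .
    then have "A i j \<le> 0" "A j i \<le> 0" "\<not> (A i k > 0 \<and> A k j > 0)" "\<not> (A j k > 0 \<and> A k i > 0)"
      using no_path[of i j] no_path[of j i] False that by auto
    then show ?thesis
      using sgn_swap[of i j] sgn_swap[of i k] sgn_swap[of k j] that
      by (auto simp: mult_le_0_iff sgn_if split: if_splits)
  qed
  then show ?thesis
    using adm unfolding strongly_admissible_def admissible_def by blast
qed

lemma orbit_mutation_eq_if:
  assumes "finite I" "I \<subseteq> Q0"
    and "\<And>i j. i \<in> I \<Longrightarrow> j \<in> I \<Longrightarrow> B i j = 0"
    and "\<And>i j k. i \<in> Q0 \<Longrightarrow> j \<in> Q0 \<Longrightarrow> k \<in> I \<Longrightarrow> B i k * B k j \<le> 0"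
    and "i \<in> Q0" "j \<in> Q0"
  shows "orbit_mutation I B i j = (if i \<in> I \<or> j \<in> I then - B i j else B i j)"
proof -
  let ?xs = "SOME xs. distinct xs \<and> set xs = I"
  have "distinct ?xs \<and> set ?xs = I"
    using finite_distinct_list[OF assms(1)] by (metis (mono_tags, lifting) someI_ex)
  then show ?thesis
    unfolding orbit_mutation_def using foldr_mutation_eq_if[of ?xs I Q0 B i j] assms by simp
qed

lemma orbit_mutation_two_orbits_eq_uminus:
  assumes "finite Q0" "card (orbits Q0 G) = 2" "I \<in> orbits Q0 G"
    and "strongly_admissible Q0 B G" "i \<in> Q0" "j \<in> Q0"
  shows "orbit_mutation I B i j = - B i j"
proof -
  have group: "perm_group_on Q0 G"
    using assms(4) unfolding strongly_admissible_def automorphism_group_def by blast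
  obtain i0 where i0: "i0 \<in> Q0" "I = orbit G i0"
    using assms(3) unfolding orbits_def by blast
  have I_sub: "I \<subseteq> Q0"
    using perm_group_on_orbit_subset[OF group i0(1)] i0(2) by simp
  have same_orbit: "j' \<in> orbit G i'" if "i' \<in> Q0" "j' \<in> Q0" "i' \<in> I \<longleftrightarrow> j' \<in> I" for i' j'
  proof (cases "i' \<in> I")
    case True
    then show ?thesis
      using that i0(2) perm_group_on_orbit_sym[OF group] perm_group_on_orbit_trans[OF group]
      by blast
  next
    case False
    then show ?thesis
      using that two_orbits_same_orbit_outside[OF group assms(2,3)] by blast
  qed
  have coherent: "B i' j' = 0 \<and> (\<forall>k\<in>Q0. B i' k * B k j' \<le> 0)"
    if "i' \<in> Q0" "j' \<in> Q0" "i' \<in> I \<longleftrightarrow> j' \<in> I" for i' j'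
    using assms(4) same_orbit[OF that] that unfolding strongly_admissible_def by blast
  have "B i' k * B k j' \<le> 0" if "i' \<in> Q0" "j' \<in> Q0" "k \<in> I" for i' j' k
    using coherent[of i' k] coherent[of k j'] coherent[of i' j'] that I_sub
    by (cases "i' \<in> I"; cases "j' \<in> I") auto
  then have "orbit_mutation I B i j = (if i \<in> I \<or> j \<in> I then - B i j else B i j)"
    using orbit_mutation_eq_if[OF finite_subset[OF I_sub assms(1)] I_sub] coherent I_sub assms(5,6)
    by blast
  then show ?thesis
    using coherent[of i j] assms(5,6) by auto
qed

lemma strongly_admissible_orbit_mutations:
  assumes "finite Q0" "card (orbits Q0 G) = 2"
    and "strongly_admissible Q0 B G" "set Is \<subseteq> orbits Q0 G"
  shows "strongly_admissible Q0 (orbit_mutations Is B) G"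
  using assms(3,4)
proof (induction Is arbitrary: B)
  case Nil
  then show ?case by (simp add: orbit_mutations_def)
next
  case (Cons I Is)
  have "strongly_admissible Q0 (orbit_mutation I B) G"
    using strongly_admissible_cong[of Q0 "orbit_mutation I B" "\<lambda>i j. - B i j" G]
      orbit_mutation_two_orbits_eq_uminus[OF assms(1,2)] strongly_admissible_uminus Cons.prems
    by simp
  then show ?case
    using Cons.IH Cons.prems(2) by (simp add: orbit_mutations_def)
qed

theorem mainTheorem13:
  fixes Q0 :: "'a set" and A :: "'a \<Rightarrow> 'a \<Rightarrow> int" and G :: "('a \<Rightarrow> 'a) set"
  assumes "finite Q0"
    and "skew_symmetrizable Q0 A"
    and "admissible Q0 A G"
    and "card (orbits Q0 G) = 2"
  shows "admissible Q0 A G \<and> stable_pair Q0 A G"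
proof -
  have "strongly_admissible Q0 A G"
    using admissible_imp_strongly_admissible assms(2,3) .
  then have "admissible Q0 (orbit_mutations Is A) G" if "set Is \<subseteq> orbits Q0 G" for Is
    using strongly_admissible_orbit_mutations[OF assms(1,4)] strongly_admissible_imp_admissible that
    by blast
  then show ?thesis
    unfolding stable_pair_def using assms(3) set_take_subset by (metis order_trans)
qed

end
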